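(* Let $\rho=(\frac12,\ldots,\frac12)\in\mathbb{R}^6$ and let $P_{\rm ext}$ be the convex hull of the vectors $e_j$ and $\rho-2e_j$ ($0\le j\le5$). Inside the affine subspace $\{\alpha\in\mathbb{R}^6:2\rho\cdot\alpha=1\}$, the bounding inequalities of $P_{\rm ext}$ are \[\alpha_r+\alpha_s\le1,\qquad 0\le r<s\le5;\] that is, $P_{\rm ext}$ is the set of $\alpha$ with $\sum_r\alpha_r=1$ satisfying these inequalities, and each is facet-defining.
   Context: $e_0,\ldots,e_5$ is the standard basis of $\mathbb{R}^6$. *)

theory Defs
  imports "HOL-Analysis.Analysis" "HOL-Library.Numeral_Type"
begin

text \<open>Vectors in R^6 are real^6, indexed by the numeral type 6 whose elements are 0,...,5
  (ordered 0 < 1 < ... < 5). The standard basis vector e_j is axis j 1.\<close>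

definition rho :: "real^6" where
  "rho = (\<chi> i. 1/2)"

definition P_ext :: "(real^6) set" where
  "P_ext = convex hull ((\<lambda>j. axis j (1::real)) ` UNIV \<union> (\<lambda>j. rho - 2 *\<^sub>R axis j 1) ` UNIV)"

end

theory Submission
  imports Defs
begin

text \<open>Each generator \<open>e\<^sub>j\<close>, \<open>\<rho> - 2e\<^sub>j\<close> has coordinate sum 1 and pairwise coordinate sums at
  most 1, so \<open>P_ext\<close> lies in the polytope \<open>P_ineq\<close> cut out by these conditions. Conversely, for
  \<open>\<alpha> \<in> P_ineq\<close> put \<open>c = min (1/2) (1 - max\<^sub>j \<alpha>\<^sub>j)\<close>. Every coordinate except possibly the
  largest is at most \<open>c\<close>, and the largest exceeds \<open>c\<close> only when \<open>c = 1 - max\<^sub>j \<alpha>\<^sub>j\<close>; in both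
  cases \<open>\<Sum>\<^sub>j (c - \<alpha>\<^sub>j)\<^sup>+ = 4c\<close>, which is exactly what makes
  \<open>\<alpha> = \<Sum>\<^sub>j (\<alpha>\<^sub>j - c)\<^sup>+ e\<^sub>j + \<Sum>\<^sub>j (c - \<alpha>\<^sub>j)\<^sup>+/2 (\<rho> - 2e\<^sub>j)\<close> a convex combination of generators.

  The points with \<open>\<alpha>\<^sub>r + \<alpha>\<^sub>s = 1\<close> form a face, exposed by a supporting hyperplane. It contains
  \<open>e\<^sub>r\<close>, \<open>e\<^sub>s\<close> and \<open>\<rho> - 2e\<^sub>j\<close> for \<open>j \<notin> {r, s}\<close>; adding the single outside point \<open>\<rho> - 2e\<^sub>r\<close>
  yields every generator by affine combinations, so the face has codimension one.\<close>

lemma sum_pos_part_deficit: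
  fixes a :: "'i::finite \<Rightarrow> real"
  assumes sum_eq: "(\<Sum>j\<in>UNIV. a j) = 1" and pair_le: "\<And>r s. r \<noteq> s \<Longrightarrow> a r + a s \<le> 1"
  defines "c \<equiv> min (1/2) (1 - Max (range a))"
  shows "(\<Sum>j\<in>UNIV. max (c - a j) 0) = (real CARD('i) - 2) * c"
proof (cases "Max (range a) \<le> 1/2")
  case True
  then have c: "c = 1/2" by (simp add: c_def)
  have "a j \<le> c" for j using True c by (metis Max_ge finite rangeI order_trans finite_imageI)
  then have "(\<Sum>j\<in>UNIV. max (c - a j) 0) = (\<Sum>j\<in>UNIV. c - a j)" by (intro sum.cong) auto
  also have "\<dots> = real CARD('i) * c - 1" by (simp add: sum_subtractf sum_eq)
  finally show ?thesis by (simp add: c algebra_simps)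
next
  case False
  obtain k where k: "a k = Max (range a)"
    by (metis Max_in finite imageE finite_imageI UNIV_not_empty image_is_empty)
  then have c: "c = 1 - a k" using False by (simp add: c_def)
  have "a j \<le> c" if "j \<noteq> k" for j using pair_le[OF that] c by simp
  then have "(\<Sum>j\<in>UNIV - {k}. max (c - a j) 0) = (\<Sum>j\<in>UNIV - {k}. c - a j)"
    by (intro sum.cong) auto
  also have "\<dots> = (real CARD('i) - 1) * c - c"
    using sum.remove[of UNIV k a] sum_eq c by (simp add: sum_subtractf card_Diff_singleton)
  finally have "(\<Sum>j\<in>UNIV - {k}. max (c - a j) 0) = (real CARD('i) - 2) * c"
    by (simp add: algebra_simps)
  moreover have "max (c - a k) 0 = 0" using False k c by simp
  ultimately show ?thesis by (simp add: sum.remove[of UNIV k])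
qed

lemma convex_hull_Un_range_sum:
  fixes a b :: "'i::finite \<Rightarrow> 'a::real_vector"
  assumes "\<And>j. 0 \<le> u j" "\<And>j. 0 \<le> w j" "sum u UNIV + sum w UNIV = 1"
  shows "(\<Sum>j\<in>UNIV. u j *\<^sub>R a j) + (\<Sum>j\<in>UNIV. w j *\<^sub>R b j) \<in> convex hull (range a \<union> range b)"
proof -
  have "(\<Sum>k\<in>UNIV. case_sum u w k *\<^sub>R case_sum a b k) \<in> convex hull (range a \<union> range b)"
    using assms
    by (intro convex_sum) (auto split: sum.splits simp: sum.Plus[where A=UNIV and B=UNIV, simplified]
        intro: hull_subset[THEN subsetD])
  then show ?thesis
    by (simp add: sum.Plus[where A=UNIV and B=UNIV, simplified] comp_def)
qed

lemma facet_of_if_subset_affine_hull_insert: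
  fixes S :: "'a::euclidean_space set"
  assumes "convex S" "F face_of S" "F \<noteq> {}" "p \<in> S" "p \<notin> F" "S \<subseteq> affine hull (insert p F)"
  shows "F facet_of S"
proof -
  have "aff_dim F < aff_dim S"
    using assms by (intro face_of_aff_dim_lt) auto
  moreover have "aff_dim S \<le> aff_dim F + 1"
  proof -
    have "aff_dim S \<le> aff_dim (affine hull (insert p F))" using assms(6) by (rule aff_dim_subset)
    also have "\<dots> \<le> aff_dim F + 1" by (simp add: aff_dim_insert)
    finally show ?thesis .
  qed
  ultimately show ?thesis using assms by (simp add: facet_of_def)
qed

lemma rho_nth [simp]: "rho $ i = 1/2"
  by (simp add: rho_def)

lemma two_rho_inner: "2 * (rho \<bullet> x) = (\<Sum>i\<in>UNIV. x $ i)"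
  by (simp add: inner_vec_def sum_distrib_left)

definition P_ineq :: "(real^6) set" where
  "P_ineq = {\<alpha>. 2 * (rho \<bullet> \<alpha>) = 1 \<and> (\<forall>r s::6. r < s \<longrightarrow> \<alpha> $ r + \<alpha> $ s \<le> 1)}"

lemma mem_P_ineq:
  "\<alpha> \<in> P_ineq \<longleftrightarrow> (\<Sum>i\<in>UNIV. \<alpha> $ i) = 1 \<and> (\<forall>r s. r \<noteq> s \<longrightarrow> \<alpha> $ r + \<alpha> $ s \<le> 1)"
  unfolding P_ineq_def two_rho_inner
  by (auto simp: neq_iff) (metis add.commute)

lemma convex_P_ineq: "convex P_ineq"
proof -
  have P_ineq_eq: "P_ineq = {\<alpha>. (2 *\<^sub>R rho) \<bullet> \<alpha> = 1}
      \<inter> (\<Inter>(r, s)\<in>{(r, s). r < s}. {\<alpha>. (axis r 1 + axis s 1) \<bullet> \<alpha> \<le> 1})"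
    by (auto simp: P_ineq_def inner_add_left inner_axis')
  show ?thesis
    unfolding P_ineq_eq
    by (intro convex_Int convex_hyperplane convex_INT) (simp add: split_beta convex_halfspace_le)
qed

lemma axis_in_P_ineq: "axis j 1 \<in> P_ineq"
  by (auto simp: mem_P_ineq axis_def)

lemma rho_minus_axis_in_P_ineq: "rho - 2 *\<^sub>R axis j 1 \<in> P_ineq"
  by (auto simp: mem_P_ineq axis_def sum_subtractf sum_distrib_left[symmetric])

lemma P_ext_subset_P_ineq: "P_ext \<subseteq> P_ineq"
  unfolding P_ext_def
  by (rule hull_minimal) (auto simp: axis_in_P_ineq rho_minus_axis_in_P_ineq convex_P_ineq)

lemma axis_in_P_ext: "axis j 1 \<in> P_ext"
  and rho_minus_axis_in_P_ext: "rho - 2 *\<^sub>R axis j 1 \<in> P_ext"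
  unfolding P_ext_def by (auto intro: hull_subset[THEN subsetD])

lemma P_ineq_subset_P_ext: "P_ineq \<subseteq> P_ext"
proof
  fix x assume "x \<in> P_ineq"
  then have sum_eq: "(\<Sum>i\<in>UNIV. x $ i) = 1" and pair_le: "\<And>r s. r \<noteq> s \<Longrightarrow> x $ r + x $ s \<le> 1"
    by (auto simp: mem_P_ineq)
  define c where "c = min (1/2) (1 - Max (range (($) x)))"
  define l where "l j = max (x $ j - c) 0" for j
  define m where "m j = max (c - x $ j) 0 / 2" for j
  have sum_m: "sum m UNIV = 2 * c"
    using sum_pos_part_deficit[of "($) x", OF sum_eq pair_le]
    by (simp add: m_def c_def sum_divide_distrib[symmetric])
  have l_eq: "l j = x $ j - c + 2 * m j" for j
    by (simp add: l_def m_def)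
  have "sum l UNIV + sum m UNIV = 1"
    using sum_eq sum_m by (simp add: l_eq sum.distrib sum_subtractf sum_distrib_left[symmetric])
  then have "(\<Sum>j\<in>UNIV. l j *\<^sub>R axis j 1) + (\<Sum>j\<in>UNIV. m j *\<^sub>R (rho - 2 *\<^sub>R axis j 1)) \<in> P_ext"
    unfolding P_ext_def by (intro convex_hull_Un_range_sum) (auto simp: l_def m_def)
  moreover have "x = (\<Sum>j\<in>UNIV. l j *\<^sub>R axis j 1) + (\<Sum>j\<in>UNIV. m j *\<^sub>R (rho - 2 *\<^sub>R axis j 1))"
  proof (subst vec_eq_iff, intro allI)
    fix i
    have "(\<Sum>j\<in>UNIV. m j *\<^sub>R (rho - 2 *\<^sub>R axis j 1)) $ i = sum m UNIV / 2 - 2 * m i"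
      by (simp add: axis_def algebra_simps sum_subtractf sum_divide_distrib if_distrib cong: if_cong)
    then show "x $ i = ((\<Sum>j\<in>UNIV. l j *\<^sub>R axis j 1) + (\<Sum>j\<in>UNIV. m j *\<^sub>R (rho - 2 *\<^sub>R axis j 1))) $ i"
      by (simp add: axis_def if_distrib l_eq sum_m cong: if_cong)
  qed
  ultimately show "x \<in> P_ext" by simp
qed

lemma face_of_P_ext_pair:
  assumes "r \<noteq> s"
  shows "(P_ext \<inter> {\<alpha>. \<alpha> $ r + \<alpha> $ s = 1}) face_of P_ext"
proof -
  have "(axis r 1 + axis s 1) \<bullet> x \<le> 1" if "x \<in> P_ext" for x
    using that P_ext_subset_P_ineq assms by (auto simp: mem_P_ineq inner_add_left inner_axis')
  then have "(P_ext \<inter> {x. (axis r 1 + axis s 1) \<bullet> x = 1}) face_of P_ext"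
    by (intro face_of_Int_supporting_hyperplane_le) (simp_all add: P_ext_def)
  then show ?thesis by (simp add: inner_add_left inner_axis')
qed

lemma P_ext_subset_affine_hull_pair:
  assumes "r \<noteq> s"
  shows "P_ext \<subseteq> affine hull (insert (rho - 2 *\<^sub>R axis r 1) (P_ext \<inter> {\<alpha>. \<alpha> $ r + \<alpha> $ s = 1}))"
    (is "_ \<subseteq> ?A")
proof -
  let ?e = "\<lambda>j::6. axis j (1::real)" and ?f = "\<lambda>j::6. rho - 2 *\<^sub>R axis j 1"
  let ?F = "P_ext \<inter> {\<alpha>. \<alpha> $ r + \<alpha> $ s = 1}"
  have F_A: "?F \<subseteq> ?A" and f_r: "?f r \<in> ?A" by (auto intro: hull_subset[THEN subsetD])
  have "?e r \<in> ?F" and "?e s \<in> ?F"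
    using assms by (simp_all add: axis_in_P_ext, simp_all add: axis_def)
  then have e_r: "?e r \<in> ?A" and e_s: "?e s \<in> ?A" using F_A by auto
  have f_A: "?f j \<in> ?A" for j
  proof -
    consider "j = r" | "j = s" | "j \<noteq> r" "j \<noteq> s" by blast
    then show ?thesis
    proof cases
      case 1
      then show ?thesis using f_r by simp
    next
      case 2
      have "1 *\<^sub>R ?f r + 2 *\<^sub>R ?e r + (-2) *\<^sub>R ?e s \<in> ?A"
        using f_r e_r e_s by (intro mem_affine_3) auto
      then show ?thesis using 2 by (simp add: vec_eq_iff axis_def)
    next
      case 3
      then have "?f j \<in> ?F" by (simp add: rho_minus_axis_in_P_ext, simp add: axis_def)
      then show ?thesis using F_A by auto
    qed
  qed
  have e_A: "?e j \<in> ?A" for j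
  proof -
    have "1 *\<^sub>R ?e r + (1/2) *\<^sub>R ?f r + (-1/2) *\<^sub>R ?f j \<in> ?A"
      using f_r f_A e_r by (intro mem_affine_3) auto
    moreover have "1 *\<^sub>R ?e r + (1/2) *\<^sub>R ?f r + (-1/2) *\<^sub>R ?f j = ?e j"
      by (simp add: vec_eq_iff axis_def)
    ultimately show ?thesis by simp
  qed
  have "convex hull (range ?e \<union> range ?f) \<subseteq> ?A"
    using e_A f_A by (intro hull_minimal) (auto simp: affine_imp_convex)
  then show ?thesis unfolding P_ext_def[symmetric] .
qed

lemma facet_of_P_ext_pair:
  assumes "r \<noteq> s"
  shows "(P_ext \<inter> {\<alpha>. \<alpha> $ r + \<alpha> $ s = 1}) facet_of P_ext"
proof (rule facet_of_if_subset_affine_hull_insert)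
  show "convex P_ext" by (simp add: P_ext_def)
  show "(P_ext \<inter> {\<alpha>. \<alpha> $ r + \<alpha> $ s = 1}) face_of P_ext"
    using assms by (rule face_of_P_ext_pair)
  show "P_ext \<inter> {\<alpha>. \<alpha> $ r + \<alpha> $ s = 1} \<noteq> {}"
    using assms axis_in_P_ext[of r] by (auto simp: axis_def)
  show "rho - 2 *\<^sub>R axis r 1 \<in> P_ext" by (rule rho_minus_axis_in_P_ext)
  show "rho - 2 *\<^sub>R axis r 1 \<notin> P_ext \<inter> {\<alpha>. \<alpha> $ r + \<alpha> $ s = 1}"
    using assms by (simp add: axis_def)
  show "P_ext \<subseteq> affine hull (insert (rho - 2 *\<^sub>R axis r 1) (P_ext \<inter> {\<alpha>. \<alpha> $ r + \<alpha> $ s = 1}))"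
    using assms by (rule P_ext_subset_affine_hull_pair)
qed

theorem proposition8p2:
  shows "P_ext = {\<alpha>. 2 * (rho \<bullet> \<alpha>) = 1 \<and> (\<forall>r s::6. r < s \<longrightarrow> \<alpha> $ r + \<alpha> $ s \<le> 1)}
     \<and> (\<forall>r s::6. r < s \<longrightarrow> (P_ext \<inter> {\<alpha>. \<alpha> $ r + \<alpha> $ s = 1}) facet_of P_ext)"
proof
  show "P_ext = {\<alpha>. 2 * (rho \<bullet> \<alpha>) = 1 \<and> (\<forall>r s::6. r < s \<longrightarrow> \<alpha> $ r + \<alpha> $ s \<le> 1)}"
    using P_ext_subset_P_ineq P_ineq_subset_P_ext by (simp add: P_ineq_def)
  show "\<forall>r s::6. r < s \<longrightarrow> (P_ext \<inter> {\<alpha>. \<alpha> $ r + \<alpha> $ s = 1}) facet_of P_ext"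
    by (auto intro: facet_of_P_ext_pair)
qed

end
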